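(* Let $0<r\le1<R$ and define $f(t)=t^2$ for $|t|\le1$, $f(t)=|t|^r$ for $1<|t|\le R$, and $f(t)=\infty$ for $|t|>R$. Then for any $p\ge1$ and any $a_1\ge a_2\ge\dots\ge a_n\ge0$, the quantity $S=\sup\{\sum_ia_it_i:\sum_if(t_i)\le p\}$ satisfies, up to universal multiplicative constants, $$S\sim\begin{cases}\sqrt p\sqrt{\sum_ia_i^2}+p^{1/r}a_1 & 1\le p\le R^r,\\ \sqrt p\sqrt{\sum_ia_i^2}+R\sum_{i\le p/R^r}a_i & R^r<p\le R^2,\\ \sqrt p\sqrt{\sum_{i\ge p/R^2}a_i^2}+R\sum_{i\le p/R^r}a_i & R^2<p.\end{cases}$$
   Context: $A\sim B$ means $B/C\le A\le CB$ for a universal constant $C$. *)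

theory Defs
  imports "HOL-Analysis.Analysis"
begin

definition fA4 :: "real \<Rightarrow> real \<Rightarrow> real \<Rightarrow> ereal" where
  "fA4 r R t = (if \<bar>t\<bar> \<le> 1 then ereal (t^2)
               else if \<bar>t\<bar> \<le> R then ereal (\<bar>t\<bar> powr r) else \<infinity>)"

definition SA4 :: "real \<Rightarrow> real \<Rightarrow> real \<Rightarrow> nat \<Rightarrow> (nat \<Rightarrow> real) \<Rightarrow> real" where
  "SA4 r R p n a = Sup {(\<Sum>i=1..n. a i * t i) | t.
       (\<Sum>i=1..n. fA4 r R (t i)) \<le> ereal p}"

end

(*
  Replacing the infinite values of f by the side condition |t i| <= R turns S into a supremum
  over vectors with sum of g(t i) <= p, where g is t^2 on [-1,1] and |t|^r outside.

  Upper bound: split t into small coordinates (|t i| <= 1), controlled by Cauchy-Schwarz, and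
  large ones, with sum of |t i|^r <= p. Since r <= 1, a large coordinate satisfies
  |t i| <= b^(1-r) |t i|^r for any b >= |t i|: taking b = p^(1/r) gives the bound p^(1/r) a 1;
  taking b = R leaves a decreasing sequence charged with weights at most R^r of total mass p,
  which only sees its first p/R^r terms. For p > R^2 the small coordinates at indices below
  p/R^2 are absorbed into that head sum as well.

  Lower bound: test vectors are a single spike p^(1/r), the constant R on the first p/R^r
  indices, and a multiple of a (or of its tail) as long as its entries stay below R; when that
  fails for the tail, one tail coefficient is so large that the head sum dominates.
*)
theory Submission
  imports Defs
begin

definition quad_powr :: "real \<Rightarrow> real \<Rightarrow> real" where
  "quad_powr r t = (if \<bar>t\<bar> \<le> 1 then t^2 else \<bar>t\<bar> powr r)"

definition feasible :: "real \<Rightarrow> real \<Rightarrow> real \<Rightarrow> nat \<Rightarrow> (nat \<Rightarrow> real) \<Rightarrow> bool" where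
  "feasible r R p n t \<longleftrightarrow> (\<forall>i\<in>{1..n}. \<bar>t i\<bar> \<le> R) \<and> (\<Sum>i=1..n. quad_powr r (t i)) \<le> p"

definition head_sum :: "nat \<Rightarrow> (nat \<Rightarrow> real) \<Rightarrow> real \<Rightarrow> real" where
  "head_sum n a x = (\<Sum>i\<in>{i\<in>{1..n}. real i \<le> x}. a i)"

lemma quad_powr_le_square:
  assumes "r \<le> 1"
  shows "quad_powr r t \<le> t^2"
proof (cases "\<bar>t\<bar> \<le> 1")
  case False
  have "\<bar>t\<bar> powr r \<le> \<bar>t\<bar> powr 1" using False assms by (intro powr_mono) auto
  also have "\<dots> \<le> \<bar>t\<bar> * \<bar>t\<bar>" using False mult_left_mono[of 1 "\<bar>t\<bar>" "\<bar>t\<bar>"] by simp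
  finally show ?thesis using False by (simp add: quad_powr_def power2_eq_square)
qed (simp add: quad_powr_def)

lemma sum_fA4_le_iff_feasible:
  assumes "1 \<le> R"
  shows "(\<Sum>i=1..n. fA4 r R (t i)) \<le> ereal p \<longleftrightarrow> feasible r R p n t"
proof (cases "\<forall>i\<in>{1..n}. \<bar>t i\<bar> \<le> R")
  case True
  then have "(\<Sum>i=1..n. fA4 r R (t i)) = (\<Sum>i=1..n. ereal (quad_powr r (t i)))"
    using assms by (intro sum.cong) (auto simp: fA4_def quad_powr_def)
  then show ?thesis using True by (simp add: feasible_def)
next
  case False
  then obtain j where j: "j \<in> {1..n}" "R < \<bar>t j\<bar>" by auto
  then have "fA4 r R (t j) = \<infinity>" using assms by (simp add: fA4_def)
  then have "(\<Sum>i=1..n. fA4 r R (t i)) = \<infinity>" using j by (subst sum_Pinfty) auto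
  then show ?thesis using False by (simp add: feasible_def)
qed

lemma SA4_eq_Sup_feasible:
  assumes "1 \<le> R"
  shows "SA4 r R p n a = Sup {(\<Sum>i=1..n. a i * t i) | t. feasible r R p n t}"
  unfolding SA4_def sum_fA4_le_iff_feasible[OF assms] ..

lemma sum_if_mem_subset:
  assumes "finite A" "J \<subseteq> A"
  shows "(\<Sum>i\<in>A. if i \<in> J then f i else 0) = sum f J"
  using assms by (metis Int_absorb1 sum.inter_restrict)

lemma feasible_restrict:
  assumes "J \<subseteq> {1..n}" "0 \<le> R" "\<forall>i\<in>J. \<bar>s i\<bar> \<le> R" "(\<Sum>i\<in>J. quad_powr r (s i)) \<le> p"
  shows "feasible r R p n (\<lambda>i. if i \<in> J then s i else 0)"
proof -
  have "(\<Sum>i=1..n. quad_powr r (if i \<in> J then s i else 0))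
      = (\<Sum>i=1..n. if i \<in> J then quad_powr r (s i) else 0)"
    by (intro sum.cong) (auto simp: quad_powr_def)
  also have "\<dots> = (\<Sum>i\<in>J. quad_powr r (s i))"
    using assms(1) by (intro sum_if_mem_subset) auto
  finally show ?thesis using assms by (auto simp: feasible_def)
qed

lemma sum_mult_restrict:
  fixes a s :: "nat \<Rightarrow> real"
  assumes "J \<subseteq> {1..n}"
  shows "(\<Sum>i=1..n. a i * (if i \<in> J then s i else 0)) = (\<Sum>i\<in>J. a i * s i)"
proof -
  have "(\<Sum>i=1..n. a i * (if i \<in> J then s i else 0))
      = (\<Sum>i=1..n. if i \<in> J then a i * s i else 0)"
    by (intro sum.cong) auto
  also have "\<dots> = (\<Sum>i\<in>J. a i * s i)"
    using assms by (intro sum_if_mem_subset) auto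
  finally show ?thesis .
qed

lemma le_powr_mult_powr:
  fixes u b r :: real
  assumes "0 \<le> u" "u \<le> b" "r \<le> 1"
  shows "u \<le> b powr (1 - r) * u powr r"
proof (cases "u = 0")
  case False
  then have "u = u powr (1 - r) * u powr r" using assms(1) by (simp add: powr_add[symmetric])
  also have "\<dots> \<le> b powr (1 - r) * u powr r" using assms by (intro mult_right_mono powr_mono2) auto
  finally show ?thesis .
qed simp

lemma sum_mult_le_root_of_sum_powr:
  fixes c u :: "'i \<Rightarrow> real"
  assumes "0 < r" "r \<le> 1" "0 \<le> A" "\<forall>i\<in>B. 0 \<le> u i \<and> 0 \<le> c i \<and> c i \<le> A"
    and "finite B" "(\<Sum>i\<in>B. u i powr r) \<le> q"
  shows "(\<Sum>i\<in>B. c i * u i) \<le> q powr (1/r) * A"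
proof -
  have "0 \<le> (\<Sum>i\<in>B. u i powr r)" by (intro sum_nonneg) simp
  with assms(6) have q0: "0 \<le> q" by linarith
  have exponent: "1/r * (1 - r) = (1 - r) / r" by simp
  have "c i * u i \<le> A * (q powr ((1 - r) / r) * u i powr r)" if i: "i \<in> B" for i
  proof -
    have "u i powr r \<le> q"
      using member_le_sum[OF i, of "\<lambda>i. u i powr r"] assms(5,6) by simp
    then have "(u i powr r) powr (1/r) \<le> q powr (1/r)" using assms(1) by (intro powr_mono2) auto
    then have "u i \<le> q powr (1/r)" using assms(1,4) i by (simp add: powr_powr)
    then have "u i \<le> (q powr (1/r)) powr (1 - r) * u i powr r"
      using le_powr_mult_powr assms(2,4) i by blast
    then have "u i \<le> q powr ((1 - r) / r) * u i powr r" by (simp only: powr_powr exponent)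
    then show ?thesis using assms(4) i by (intro mult_mono) auto
  qed
  then have "(\<Sum>i\<in>B. c i * u i) \<le> (\<Sum>i\<in>B. A * (q powr ((1 - r) / r) * u i powr r))"
    by (rule sum_mono)
  also have "\<dots> = A * q powr ((1 - r) / r) * (\<Sum>i\<in>B. u i powr r)"
    by (simp only: sum_distrib_left mult.assoc)
  also have "\<dots> \<le> A * q powr ((1 - r) / r) * q"
    using assms(3,6) by (intro mult_left_mono) auto
  also have "\<dots> = A * q powr ((1 - r) / r + 1)"
    using q0 by (simp add: powr_add)
  also have "(1 - r) / r + 1 = 1 / r" using assms(1) by (simp add: field_simps)
  finally show ?thesis by (simp add: mult.commute)
qed

lemma sum_mult_abs_le_sqrt_sum_squares:
  fixes a t :: "'i \<Rightarrow> real"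
  assumes "finite J" "K \<subseteq> J" "\<forall>i\<in>K. 0 \<le> a i"
  shows "(\<Sum>i\<in>K. a i * \<bar>t i\<bar>) \<le> sqrt (\<Sum>i\<in>J. (a i)^2) * sqrt (\<Sum>i\<in>K. (t i)^2)"
proof -
  have "(\<Sum>i\<in>K. a i * \<bar>t i\<bar>) = (\<Sum>i\<in>K. \<bar>a i\<bar> * \<bar>t i\<bar>)" using assms(3) by (intro sum.cong) auto
  also have "\<dots> \<le> L2_set a K * L2_set t K" by (rule L2_set_mult_ineq)
  also have "\<dots> \<le> sqrt (\<Sum>i\<in>J. (a i)^2) * sqrt (\<Sum>i\<in>K. (t i)^2)"
    unfolding L2_set_def
    by (intro mult_right_mono real_sqrt_le_mono sum_mono2 assms) (auto intro: sum_nonneg)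
  finally show ?thesis .
qed

locale antitone_seq =
  fixes n :: nat and a :: "nat \<Rightarrow> real"
  assumes decreasing: "\<And>i j. 1 \<le> i \<Longrightarrow> i \<le> j \<Longrightarrow> j \<le> n \<Longrightarrow> a j \<le> a i"
    and last_nonneg: "0 \<le> a n"
begin

lemma nonneg: "i \<in> {1..n} \<Longrightarrow> 0 \<le> a i"
  using decreasing[of i n] last_nonneg by auto

lemma sum_le_head_sum: "B \<subseteq> {i\<in>{1..n}. real i \<le> x} \<Longrightarrow> (\<Sum>i\<in>B. a i) \<le> head_sum n a x"
  unfolding head_sum_def using nonneg by (intro sum_mono2) auto

lemma head_sum_nonneg: "0 \<le> head_sum n a x"
  using sum_le_head_sum[of "{}"] by simp

lemma head_sum_mono: "x \<le> y \<Longrightarrow> head_sum n a x \<le> head_sum n a y"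
  unfolding head_sum_def[of n a x] by (rule sum_le_head_sum) auto

lemma mult_le_head_sum:
  assumes "1 \<le> x" "x \<le> real i" "i \<le> n"
  shows "x * a i \<le> 2 * head_sum n a x"
proof -
  define k where "k = nat \<lfloor>x\<rfloor>"
  have "real k = of_int \<lfloor>x\<rfloor>" using assms(1) by (simp add: k_def)
  moreover have "of_int \<lfloor>x\<rfloor> \<le> x" "x < of_int \<lfloor>x\<rfloor> + 1" "(1::int) \<le> \<lfloor>x\<rfloor>"
    using assms(1) by (auto simp: le_floor_iff)
  ultimately have k: "1 \<le> k" "real k \<le> x" "x \<le> 2 * real k" by linarith+
  with assms(2) have "k \<le> i" by linarith
  have ai: "0 \<le> a i" using k \<open>k \<le> i\<close> assms by (intro nonneg) auto
  have "x * a i \<le> 2 * (real k * a i)" using mult_right_mono[OF k(3) ai] by simp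
  also have "real k * a i = (\<Sum>j=1..k. a i)" by simp
  also have "\<dots> \<le> (\<Sum>j=1..k. a j)" using \<open>k \<le> i\<close> assms by (intro sum_mono decreasing) auto
  also have "\<dots> \<le> head_sum n a x" using k \<open>k \<le> i\<close> assms by (intro sum_le_head_sum) auto
  finally show ?thesis by simp
qed

text \<open>Indices i > x = q/W have a i \<le> 2 head_sum x / x, so together they are charged at most
  2 W head_sum x; the indices up to x are charged at most W each.\<close>
lemma weighted_sum_le_head_sum:
  assumes "B \<subseteq> {1..n}" "0 < W" "W \<le> q" "\<forall>i\<in>B. 0 \<le> w i \<and> w i \<le> W" "(\<Sum>i\<in>B. w i) \<le> q"
  shows "(\<Sum>i\<in>B. a i * w i) \<le> 3 * W * head_sum n a (q / W)"
proof -
  define x where "x = q / W"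
  define hs where "hs = head_sum n a x"
  define Bl where "Bl = B \<inter> {i. real i \<le> x}"
  define Bh where "Bh = B - {i. real i \<le> x}"
  have x1: "1 \<le> x" using assms(2,3) by (simp add: x_def)
  have finB: "finite B" using assms(1) finite_subset by blast
  have "a i * w i \<le> W * a i" if "i \<in> B" for i
    using assms(1,4) nonneg[of i] that mult_left_mono[of "w i" W "a i"] by (auto simp: mult.commute)
  then have "(\<Sum>i\<in>Bl. a i * w i) \<le> (\<Sum>i\<in>Bl. W * a i)"
    by (intro sum_mono) (auto simp: Bl_def)
  also have "\<dots> \<le> W * hs"
    unfolding sum_distrib_left[symmetric] hs_def using assms(1,2)
    by (intro mult_left_mono sum_le_head_sum) (auto simp: Bl_def)
  finally have low: "(\<Sum>i\<in>Bl. a i * w i) \<le> W * hs" .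
  have ai: "a i \<le> 2 * hs / x" if "i \<in> Bh" for i
    using mult_le_head_sum[OF x1, of i] that assms(1) x1 by (auto simp: Bh_def hs_def field_simps)
  have "(\<Sum>i\<in>Bh. a i * w i) \<le> (\<Sum>i\<in>Bh. 2 * hs / x * w i)"
    using ai assms(4) by (intro sum_mono mult_right_mono) (auto simp: Bh_def)
  also have "\<dots> \<le> 2 * hs / x * q"
  proof -
    have "(\<Sum>i\<in>Bh. w i) \<le> (\<Sum>i\<in>B. w i)"
      using finB assms(4) by (intro sum_mono2) (auto simp: Bh_def)
    then show ?thesis
      unfolding sum_distrib_left[symmetric] using assms(5) x1 head_sum_nonneg
      by (intro mult_left_mono) (auto simp: hs_def)
  qed
  also have "\<dots> = 2 * W * hs" using assms(2,3) by (simp add: x_def)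
  finally have high: "(\<Sum>i\<in>Bh. a i * w i) \<le> 2 * W * hs" .
  have "(\<Sum>i\<in>B. a i * w i) = (\<Sum>i\<in>Bl. a i * w i) + (\<Sum>i\<in>Bh. a i * w i)"
    unfolding Bl_def Bh_def using finB by (rule sum.Int_Diff)
  then show ?thesis using low high by (simp add: hs_def x_def)
qed

end

locale truncated_powr_problem = antitone_seq +
  fixes r R p :: real
  assumes r_pos: "0 < r" and r_le_one: "r \<le> 1" and R_gt_one: "1 < R" and p_ge_one: "1 \<le> p"
    and n_pos: "1 \<le> n"
begin

lemma R_powr_le_square: "R powr r \<le> R^2"
proof -
  have "R powr r \<le> R powr 2" using R_gt_one r_le_one by (intro powr_mono) auto
  then show ?thesis using R_gt_one by (simp add: powr_numeral)
qed

lemma feasible_sum_le: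
  assumes "feasible r R p n t"
  shows "(\<Sum>i=1..n. a i * t i) \<le> R * (\<Sum>i=1..n. a i)"
proof -
  have "a i * t i \<le> R * a i" if "i \<in> {1..n}" for i
  proof -
    have "\<bar>t i\<bar> \<le> R" using assms that by (auto simp: feasible_def)
    then have "t i \<le> R" by linarith
    then show ?thesis using nonneg[OF that] mult_left_mono[of "t i" R "a i"] by (simp add: mult.commute)
  qed
  then have "(\<Sum>i=1..n. a i * t i) \<le> (\<Sum>i=1..n. R * a i)" by (intro sum_mono) auto
  then show ?thesis by (simp add: sum_distrib_left)
qed

lemma le_SA4I:
  assumes "feasible r R p n t" "x \<le> (\<Sum>i=1..n. a i * t i)"
  shows "x \<le> SA4 r R p n a"
proof -
  have "bdd_above {(\<Sum>i=1..n. a i * t i) | t. feasible r R p n t}"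
    using feasible_sum_le by (intro bdd_aboveI) blast
  then show ?thesis
    unfolding SA4_eq_Sup_feasible[OF less_imp_le[OF R_gt_one]] using assms
    by (intro cSup_upper2) auto
qed

lemma restricted_le_SA4:
  assumes "J \<subseteq> {1..n}" "\<forall>i\<in>J. \<bar>s i\<bar> \<le> R" "(\<Sum>i\<in>J. quad_powr r (s i)) \<le> p"
  shows "(\<Sum>i\<in>J. a i * s i) \<le> SA4 r R p n a"
proof (rule le_SA4I[OF _ eq_refl])
  show "feasible r R p n (\<lambda>i. if i \<in> J then s i else 0)"
    using assms R_gt_one by (intro feasible_restrict) auto
qed (rule sum_mult_restrict[OF assms(1), symmetric])

lemma SA4_nonneg: "0 \<le> SA4 r R p n a"
  using restricted_le_SA4[of "{}"] p_ge_one by simp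

lemma SA4_leI:
  assumes "\<And>t. feasible r R p n t \<Longrightarrow> (\<Sum>i=1..n. a i * t i) \<le> U"
  shows "SA4 r R p n a \<le> U"
proof -
  have "feasible r R p n (\<lambda>_. 0)"
    using R_gt_one p_ge_one by (simp add: feasible_def quad_powr_def)
  then show ?thesis
    unfolding SA4_eq_Sup_feasible[OF less_imp_le[OF R_gt_one]] using assms
    by (intro cSup_least) auto
qed

lemma feasible_split:
  assumes "feasible r R p n t"
  defines "Sm \<equiv> {i\<in>{1..n}. \<bar>t i\<bar> \<le> 1}" and "Bg \<equiv> {i\<in>{1..n}. 1 < \<bar>t i\<bar>}"
  shows "(\<Sum>i=1..n. a i * t i) \<le> (\<Sum>i\<in>Sm. a i * \<bar>t i\<bar>) + (\<Sum>i\<in>Bg. a i * \<bar>t i\<bar>)"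
    and "(\<Sum>i\<in>Sm. (t i)^2) \<le> p"
    and "(\<Sum>i\<in>Bg. \<bar>t i\<bar> powr r) \<le> p"
proof -
  have U: "{1..n} = Sm \<union> Bg" and D: "Sm \<inter> Bg = {}" and fin: "finite Sm" "finite Bg"
    by (auto simp: Sm_def Bg_def)
  have "(\<Sum>i=1..n. a i * t i) \<le> (\<Sum>i=1..n. a i * \<bar>t i\<bar>)"
    using nonneg by (intro sum_mono mult_left_mono) auto
  also have "\<dots> = (\<Sum>i\<in>Sm. a i * \<bar>t i\<bar>) + (\<Sum>i\<in>Bg. a i * \<bar>t i\<bar>)"
    unfolding U by (rule sum.union_disjoint[OF fin D])
  finally show "(\<Sum>i=1..n. a i * t i) \<le> (\<Sum>i\<in>Sm. a i * \<bar>t i\<bar>) + (\<Sum>i\<in>Bg. a i * \<bar>t i\<bar>)" .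
  have "(\<Sum>i\<in>Sm. (t i)^2) + (\<Sum>i\<in>Bg. \<bar>t i\<bar> powr r)
      = (\<Sum>i\<in>Sm. quad_powr r (t i)) + (\<Sum>i\<in>Bg. quad_powr r (t i))"
    by (intro arg_cong2[where f = "(+)"] sum.cong) (auto simp: Sm_def Bg_def quad_powr_def)
  also have "\<dots> = (\<Sum>i=1..n. quad_powr r (t i))"
    unfolding U by (rule sum.union_disjoint[OF fin D, symmetric])
  also have "\<dots> \<le> p" using assms(1) by (simp add: feasible_def)
  finally have "(\<Sum>i\<in>Sm. (t i)^2) + (\<Sum>i\<in>Bg. \<bar>t i\<bar> powr r) \<le> p" .
  moreover have "0 \<le> (\<Sum>i\<in>Sm. (t i)^2)" "0 \<le> (\<Sum>i\<in>Bg. \<bar>t i\<bar> powr r)"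
    by (auto intro: sum_nonneg)
  ultimately show "(\<Sum>i\<in>Sm. (t i)^2) \<le> p" "(\<Sum>i\<in>Bg. \<bar>t i\<bar> powr r) \<le> p" by linarith+
qed

lemma sum_mult_abs_le_sqrt_bound:
  assumes "K \<subseteq> J" "J \<subseteq> {1..n}" "(\<Sum>i\<in>K. (t i)^2) \<le> p"
  shows "(\<Sum>i\<in>K. a i * \<bar>t i\<bar>) \<le> sqrt p * sqrt (\<Sum>i\<in>J. (a i)^2)"
proof -
  have "finite J" using assms(2) finite_subset by blast
  then have "(\<Sum>i\<in>K. a i * \<bar>t i\<bar>) \<le> sqrt (\<Sum>i\<in>J. (a i)^2) * sqrt (\<Sum>i\<in>K. (t i)^2)"
    using assms(1,2) nonneg by (intro sum_mult_abs_le_sqrt_sum_squares) auto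
  also have "\<dots> \<le> sqrt (\<Sum>i\<in>J. (a i)^2) * sqrt p"
    using assms(3) by (intro mult_left_mono) (auto intro: sum_nonneg)
  finally show ?thesis by (simp add: mult.commute)
qed

lemma sum_mult_abs_le_head_sum:
  assumes "R powr r < p" "B \<subseteq> {1..n}" "\<forall>i\<in>B. \<bar>t i\<bar> \<le> R" "(\<Sum>i\<in>B. \<bar>t i\<bar> powr r) \<le> p"
  shows "(\<Sum>i\<in>B. a i * \<bar>t i\<bar>) \<le> 3 * R * head_sum n a (p / R powr r)"
proof -
  have "a i * \<bar>t i\<bar> \<le> R powr (1 - r) * (a i * \<bar>t i\<bar> powr r)" if i: "i \<in> B" for i
  proof -
    have "\<bar>t i\<bar> \<le> R powr (1 - r) * \<bar>t i\<bar> powr r"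
      using i assms(3) r_le_one by (intro le_powr_mult_powr) auto
    moreover have "0 \<le> a i" using i assms(2) nonneg by auto
    ultimately show ?thesis by (simp add: mult_left_mono mult_ac)
  qed
  then have "(\<Sum>i\<in>B. a i * \<bar>t i\<bar>) \<le> R powr (1 - r) * (\<Sum>i\<in>B. a i * \<bar>t i\<bar> powr r)"
    by (simp add: sum_mono sum_distrib_left)
  also have "\<dots> \<le> R powr (1 - r) * (3 * R powr r * head_sum n a (p / R powr r))"
    using assms R_gt_one r_pos
    by (intro mult_left_mono weighted_sum_le_head_sum) (auto intro: powr_mono2)
  also have "\<dots> = 3 * R * head_sum n a (p / R powr r)"
    using R_gt_one by (simp add: powr_add[symmetric])
  finally show ?thesis .
qed

lemma feasible_sum_le_spike_bound:
  assumes "feasible r R p n t"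
  shows "(\<Sum>i=1..n. a i * t i) \<le> sqrt p * sqrt (\<Sum>i=1..n. (a i)^2) + p powr (1/r) * a 1"
proof -
  note split = feasible_split[OF assms]
  have "(\<Sum>i\<in>{i\<in>{1..n}. 1 < \<bar>t i\<bar>}. a i * \<bar>t i\<bar>) \<le> p powr (1/r) * a 1"
    using split(3) r_pos r_le_one n_pos nonneg decreasing[of 1]
    by (intro sum_mult_le_root_of_sum_powr) auto
  moreover have "(\<Sum>i\<in>{i\<in>{1..n}. \<bar>t i\<bar> \<le> 1}. a i * \<bar>t i\<bar>) \<le> sqrt p * sqrt (\<Sum>i=1..n. (a i)^2)"
    using split(2) by (intro sum_mult_abs_le_sqrt_bound) auto
  ultimately show ?thesis using split(1) by linarith
qed

lemma feasible_sum_le_block_bound: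
  assumes "R powr r < p" "feasible r R p n t"
  shows "(\<Sum>i=1..n. a i * t i)
    \<le> sqrt p * sqrt (\<Sum>i=1..n. (a i)^2) + 3 * R * head_sum n a (p / R powr r)"
proof -
  note split = feasible_split[OF assms(2)]
  have "(\<Sum>i\<in>{i\<in>{1..n}. 1 < \<bar>t i\<bar>}. a i * \<bar>t i\<bar>) \<le> 3 * R * head_sum n a (p / R powr r)"
    using split(3) assms by (intro sum_mult_abs_le_head_sum) (auto simp: feasible_def)
  moreover have "(\<Sum>i\<in>{i\<in>{1..n}. \<bar>t i\<bar> \<le> 1}. a i * \<bar>t i\<bar>) \<le> sqrt p * sqrt (\<Sum>i=1..n. (a i)^2)"
    using split(2) by (intro sum_mult_abs_le_sqrt_bound) auto
  ultimately show ?thesis using split(1) by linarith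
qed

lemma feasible_sum_le_tail_bound:
  assumes "R^2 < p" "feasible r R p n t"
  shows "(\<Sum>i=1..n. a i * t i)
    \<le> sqrt p * sqrt (\<Sum>i\<in>{i\<in>{1..n}. p / R^2 \<le> real i}. (a i)^2) + 4 * R * head_sum n a (p / R powr r)"
proof -
  define T where "T = {i\<in>{1..n}. p / R^2 \<le> real i}"
  define Sm where "Sm = {i\<in>{1..n}. \<bar>t i\<bar> \<le> 1}"
  define hs where "hs = head_sum n a (p / R powr r)"
  note split = feasible_split[OF assms(2), folded Sm_def]
  have "(\<Sum>i\<in>{i\<in>{1..n}. 1 < \<bar>t i\<bar>}. a i * \<bar>t i\<bar>) \<le> 3 * R * hs"
    using split(3) assms R_powr_le_square unfolding hs_def
    by (intro sum_mult_abs_le_head_sum) (auto simp: feasible_def)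
  moreover have "(\<Sum>i\<in>Sm \<inter> T. a i * \<bar>t i\<bar>) \<le> sqrt p * sqrt (\<Sum>i\<in>T. (a i)^2)"
  proof (rule sum_mult_abs_le_sqrt_bound)
    show "(\<Sum>i\<in>Sm \<inter> T. (t i)^2) \<le> p"
      using split(2) by (rule order_trans[rotated]) (intro sum_mono2, auto simp: Sm_def)
  qed (auto simp: T_def)
  moreover have "(\<Sum>i\<in>Sm - T. a i * \<bar>t i\<bar>) \<le> hs"
  proof -
    have "(\<Sum>i\<in>Sm - T. a i * \<bar>t i\<bar>) \<le> (\<Sum>i\<in>Sm - T. a i)"
      using nonneg by (intro sum_mono mult_right_le_one_le) (auto simp: Sm_def)
    also have "\<dots> \<le> hs"
    proof -
      have "p / R^2 \<le> p / R powr r"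
        using R_powr_le_square R_gt_one p_ge_one by (intro divide_left_mono) auto
      then show ?thesis unfolding hs_def by (intro sum_le_head_sum) (auto simp: Sm_def T_def)
    qed
    finally show ?thesis .
  qed
  moreover have "0 \<le> hs" "hs \<le> R * hs"
    using head_sum_nonneg R_gt_one mult_right_mono[of 1 R hs] unfolding hs_def by auto
  moreover have "(\<Sum>i\<in>Sm. a i * \<bar>t i\<bar>) = (\<Sum>i\<in>Sm \<inter> T. a i * \<bar>t i\<bar>) + (\<Sum>i\<in>Sm - T. a i * \<bar>t i\<bar>)"
    by (rule sum.Int_Diff) (simp add: Sm_def)
  ultimately show ?thesis using split(1) unfolding T_def hs_def by linarith
qed

lemma spike_le_SA4:
  assumes "p \<le> R powr r"
  shows "p powr (1/r) * a 1 \<le> SA4 r R p n a"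
proof -
  define q where "q = p powr (1/r)"
  have q1: "1 \<le> q" unfolding q_def using p_ge_one r_pos by (simp add: ge_one_powr_ge_zero)
  have "q \<le> (R powr r) powr (1/r)" unfolding q_def using assms p_ge_one r_pos by (intro powr_mono2) auto
  then have qR: "q \<le> R" using r_pos R_gt_one by (simp add: powr_powr)
  have "quad_powr r q \<le> p"
  proof (cases "q = 1")
    case True
    then show ?thesis using p_ge_one by (simp add: quad_powr_def)
  next
    case False
    then have "quad_powr r q = q powr r" using q1 by (simp add: quad_powr_def)
    also have "\<dots> = p" unfolding q_def using r_pos p_ge_one by (simp add: powr_powr)
    finally show ?thesis by simp
  qed
  then have "(\<Sum>i\<in>{1}. a i * q) \<le> SA4 r R p n a"
    using n_pos q1 qR by (intro restricted_le_SA4) auto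
  then show ?thesis by (simp add: q_def mult.commute)
qed

lemma block_le_SA4: "R * head_sum n a (p / R powr r) \<le> SA4 r R p n a"
proof -
  define x where "x = p / R powr r"
  define H where "H = {i\<in>{1..n}. real i \<le> x}"
  have x0: "0 \<le> x" using p_ge_one by (simp add: x_def)
  have "H \<subseteq> {1..nat \<lfloor>x\<rfloor>}" by (auto simp: H_def le_nat_floor)
  then have "card H \<le> nat \<lfloor>x\<rfloor>" using card_mono[of "{1..nat \<lfloor>x\<rfloor>}" H] by simp
  then have "real (card H) \<le> x" using x0 by linarith
  then have "(\<Sum>i\<in>H. quad_powr r R) \<le> x * R powr r"
    using R_gt_one by (simp add: quad_powr_def mult_right_mono)
  also have "\<dots> = p" using R_gt_one by (simp add: x_def)
  finally have "(\<Sum>i\<in>H. a i * R) \<le> SA4 r R p n a"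
    using R_gt_one by (intro restricted_le_SA4) (auto simp: H_def)
  then show ?thesis by (simp add: head_sum_def H_def x_def sum_distrib_left mult.commute)
qed

lemma scaled_le_SA4:
  assumes "J \<subseteq> {1..n}" "\<forall>i\<in>J. sqrt p * a i \<le> R * sqrt (\<Sum>i\<in>J. (a i)^2)"
  shows "sqrt p * sqrt (\<Sum>i\<in>J. (a i)^2) \<le> SA4 r R p n a"
proof (cases "(\<Sum>i\<in>J. (a i)^2) = 0")
  case True
  then show ?thesis using SA4_nonneg by simp
next
  case False
  define Q where "Q = (\<Sum>i\<in>J. (a i)^2)"
  define c where "c = sqrt p / sqrt Q"
  have "0 \<le> Q" by (simp add: Q_def sum_nonneg)
  with False have Q: "0 < sqrt Q" "sqrt Q * sqrt Q = Q" by (simp_all add: Q_def)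
  have c0: "0 \<le> c" using Q p_ge_one by (simp add: c_def)
  have "\<bar>c * a i\<bar> \<le> R" if "i \<in> J" for i
  proof -
    have "sqrt p * a i \<le> R * sqrt Q" using assms(2) that by (simp add: Q_def)
    then show ?thesis
      using Q c0 nonneg that assms(1) by (auto simp: c_def abs_mult field_simps)
  qed
  moreover have "(\<Sum>i\<in>J. quad_powr r (c * a i)) \<le> p"
  proof -
    have "(\<Sum>i\<in>J. quad_powr r (c * a i)) \<le> (\<Sum>i\<in>J. c^2 * (a i)^2)"
      using quad_powr_le_square[OF r_le_one] by (intro sum_mono) (metis power_mult_distrib)
    also have "\<dots> = c^2 * Q" by (simp add: Q_def sum_distrib_left)
    also have "\<dots> = p" using Q p_ge_one by (simp add: c_def power_divide)
    finally show ?thesis .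
  qed
  ultimately have "(\<Sum>i\<in>J. a i * (c * a i)) \<le> SA4 r R p n a"
    using assms(1) by (intro restricted_le_SA4) auto
  moreover have "(\<Sum>i\<in>J. a i * (c * a i)) = c * Q"
    by (simp add: Q_def sum_distrib_left power2_eq_square mult_ac)
  moreover have "c * Q = sqrt p * sqrt Q"
    using Q by (simp add: c_def field_simps)
  ultimately show ?thesis by (simp add: Q_def)
qed

lemma sqrt_sum_le_SA4:
  assumes "p \<le> R^2"
  shows "sqrt p * sqrt (\<Sum>i=1..n. (a i)^2) \<le> SA4 r R p n a"
proof (rule scaled_le_SA4)
  have "sqrt p \<le> R" using assms R_gt_one real_le_lsqrt by force
  moreover have "a i \<le> sqrt (\<Sum>i=1..n. (a i)^2)" if "i \<in> {1..n}" for i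
    using member_le_sum[OF that, of "\<lambda>i. (a i)^2"] by (intro real_le_rsqrt) simp
  ultimately show "\<forall>i\<in>{1..n}. sqrt p * a i \<le> R * sqrt (\<Sum>i=1..n. (a i)^2)"
    using nonneg R_gt_one by (auto intro!: mult_mono)
qed simp

lemma sqrt_tail_le_SA4:
  assumes "R^2 < p"
  shows "sqrt p * sqrt (\<Sum>i\<in>{i\<in>{1..n}. p / R^2 \<le> real i}. (a i)^2) \<le> 2 * SA4 r R p n a"
proof -
  define T where "T = {i\<in>{1..n}. p / R^2 \<le> real i}"
  define L where "L = sqrt (\<Sum>i\<in>T. (a i)^2)"
  show ?thesis
  proof (cases "\<forall>i\<in>T. sqrt p * a i \<le> R * L")
    case True
    then have "sqrt p * L \<le> SA4 r R p n a"
      unfolding L_def by (intro scaled_le_SA4) (auto simp: T_def)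
    then show ?thesis using SA4_nonneg by (simp add: T_def L_def)
  next
    case False
    then obtain i where i: "i \<in> T" "R * L < sqrt p * a i" by (auto simp: not_le)
    define m where "m = p / R^2"
    have R2: "0 < R^2" using R_gt_one by simp
    have m: "1 \<le> m" "m \<le> real i" "p = R^2 * m"
      using assms i R2 by (auto simp: m_def T_def field_simps)
    have "m * a i \<le> 2 * head_sum n a m"
      using m i by (intro mult_le_head_sum) (auto simp: T_def)
    also have "\<dots> \<le> 2 * head_sum n a (p / R powr r)"
      using R_powr_le_square R_gt_one p_ge_one
      by (simp add: m_def divide_left_mono head_sum_mono)
    finally have ai: "m * a i \<le> 2 * head_sum n a (p / R powr r)" .
    have "R * (sqrt p * L) = sqrt p * (R * L)" by (simp add: mult_ac)
    also have "\<dots> \<le> sqrt p * (sqrt p * a i)"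
      using i(2) p_ge_one by (intro mult_left_mono) auto
    also have "\<dots> = R^2 * (m * a i)" using p_ge_one m(3) by (simp add: mult.assoc[symmetric])
    also have "\<dots> \<le> R^2 * (2 * head_sum n a (p / R powr r))"
      using ai R2 by (intro mult_left_mono) auto
    also have "\<dots> = R * (2 * (R * head_sum n a (p / R powr r)))" by (simp add: power2_eq_square)
    finally have "sqrt p * L \<le> 2 * (R * head_sum n a (p / R powr r))"
      using R_gt_one by simp
    then show ?thesis using block_le_SA4 by (simp add: T_def L_def)
  qed
qed

lemma SA4_bounds_spike_regime:
  assumes "p \<le> R powr r"
  defines "M \<equiv> sqrt p * sqrt (\<Sum>i=1..n. (a i)^2) + p powr (1/r) * a 1"
  shows "M / 4 \<le> SA4 r R p n a \<and> SA4 r R p n a \<le> 4 * M"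
proof
  have "M \<le> 2 * SA4 r R p n a"
    using sqrt_sum_le_SA4 spike_le_SA4[OF assms(1)] assms(1) R_powr_le_square
    unfolding M_def by fastforce
  then show "M / 4 \<le> SA4 r R p n a" using SA4_nonneg by simp
  have "0 \<le> M" using nonneg[of 1] n_pos p_ge_one by (simp add: M_def sum_nonneg)
  moreover have "SA4 r R p n a \<le> M"
    unfolding M_def by (rule SA4_leI) (rule feasible_sum_le_spike_bound)
  ultimately show "SA4 r R p n a \<le> 4 * M" by simp
qed

lemma SA4_bounds_block_regime:
  assumes "R powr r < p" "p \<le> R^2"
  defines "M \<equiv> sqrt p * sqrt (\<Sum>i=1..n. (a i)^2) + R * head_sum n a (p / R powr r)"
  shows "M / 4 \<le> SA4 r R p n a \<and> SA4 r R p n a \<le> 4 * M"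
proof
  have "M \<le> 2 * SA4 r R p n a"
    using sqrt_sum_le_SA4[OF assms(2)] block_le_SA4 unfolding M_def by simp
  then show "M / 4 \<le> SA4 r R p n a" using SA4_nonneg by simp
  have "0 \<le> R * head_sum n a (p / R powr r)" using R_gt_one head_sum_nonneg by simp
  moreover have "SA4 r R p n a
      \<le> sqrt p * sqrt (\<Sum>i=1..n. (a i)^2) + 3 * R * head_sum n a (p / R powr r)"
    by (rule SA4_leI) (rule feasible_sum_le_block_bound[OF assms(1)])
  moreover have "0 \<le> sqrt p * sqrt (\<Sum>i=1..n. (a i)^2)" using p_ge_one by (simp add: sum_nonneg)
  ultimately show "SA4 r R p n a \<le> 4 * M" unfolding M_def by (simp add: algebra_simps)
qed

lemma SA4_bounds_tail_regime:
  assumes "R^2 < p"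
  defines "M \<equiv> sqrt p * sqrt (\<Sum>i\<in>{i\<in>{1..n}. p / R^2 \<le> real i}. (a i)^2)
    + R * head_sum n a (p / R powr r)"
  shows "M / 4 \<le> SA4 r R p n a \<and> SA4 r R p n a \<le> 4 * M"
proof
  have "M \<le> 3 * SA4 r R p n a"
    using sqrt_tail_le_SA4[OF assms(1)] block_le_SA4 unfolding M_def by simp
  then show "M / 4 \<le> SA4 r R p n a" using SA4_nonneg by simp
  have "SA4 r R p n a \<le> sqrt p * sqrt (\<Sum>i\<in>{i\<in>{1..n}. p / R^2 \<le> real i}. (a i)^2)
      + 4 * R * head_sum n a (p / R powr r)"
    by (rule SA4_leI) (rule feasible_sum_le_tail_bound[OF assms(1)])
  moreover have "0 \<le> sqrt p * sqrt (\<Sum>i\<in>{i\<in>{1..n}. p / R^2 \<le> real i}. (a i)^2)"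
    using p_ge_one by (simp add: sum_nonneg)
  ultimately show "SA4 r R p n a \<le> 4 * M" unfolding M_def by (simp add: algebra_simps)
qed

end

theorem lemmaA4:
  "\<exists>C>0. \<forall>(r::real) (R::real) (p::real) (n::nat) (a::nat \<Rightarrow> real).
     0 < r \<and> r \<le> 1 \<and> 1 < R \<and> 1 \<le> p \<and> 1 \<le> n \<and>
     (\<forall>i j. 1 \<le> i \<longrightarrow> i \<le> j \<longrightarrow> j \<le> n \<longrightarrow> a j \<le> a i) \<and> 0 \<le> a n \<longrightarrow>
     (let S = SA4 r R p n a;
          M = (if p \<le> R powr r then
                 sqrt p * sqrt (\<Sum>i=1..n. (a i)^2) + p powr (1/r) * a 1
               else if p \<le> R^2 then
                 sqrt p * sqrt (\<Sum>i=1..n. (a i)^2)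
                   + R * (\<Sum>i\<in>{i\<in>{1..n}. real i \<le> p / R powr r}. a i)
               else
                 sqrt p * sqrt (\<Sum>i\<in>{i\<in>{1..n}. p / R^2 \<le> real i}. (a i)^2)
                   + R * (\<Sum>i\<in>{i\<in>{1..n}. real i \<le> p / R powr r}. a i))
      in M / C \<le> S \<and> S \<le> C * M)"
proof (intro exI[of _ "4::real"] conjI allI impI, goal_cases)
  case (2 r R p n a)
  then interpret truncated_powr_problem n a r R p
    by unfold_locales auto
  show ?case
    using SA4_bounds_spike_regime SA4_bounds_block_regime SA4_bounds_tail_regime
    unfolding Let_def head_sum_def by auto
qed simp

end
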